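(* Let $n\in\mathbb{N}$ and $0\leq\delta\leq n-1$, and let $q$ be a prime power with $n\leq q-1$. Put $\mathbb{F}:=\mathbb{F}_q$ and choose $\alpha\in\mathbb{F}$ with $\mathrm{ord}(\alpha)\geq n$. Define \[ G:=\sum_{\nu=0}^{\delta}z^\nu\begin{pmatrix}1&\alpha^\nu&\alpha^{2\nu}&\ldots&\alpha^{(n-1)\nu}\end{pmatrix}\in\mathbb{F}[z]^{1\times n} \] and $\mathcal{C}:=\mathrm{im}\,G=\{uG\mid u\in\mathbb{F}[z]\}\subseteq\mathbb{F}[z]^n$. Then $G$ is right invertible (so $\mathcal{C}$ is a convolutional code with parameters $(n,1,\delta)$), and $\mathrm{dist}(\mathcal{C})=n(\delta+1)$. In other words, $\mathcal{C}$ is an MDS convolutional code with parameters $(n,1,\delta)$.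
   Context: $\mathrm{ord}(\alpha)$ denotes the multiplicative order of $\alpha$ in $\mathbb{F}^*$. A matrix $G\in\mathbb{F}[z]^{k\times n}$ is right invertible if $G\tilde G=I_k$ for some $\tilde G\in\mathbb{F}[z]^{n\times k}$. A convolutional code with parameters $(n,k,\delta)$ is a submodule $\mathcal{C}=\mathrm{im}\,G=\{uG\mid u\in\mathbb{F}[z]^k\}\subseteq\mathbb{F}[z]^n$ where $G\in\mathbb{F}[z]^{k\times n}$ is right invertible and $\delta$ is the maximum degree of the $k\times k$ minors of $G$ (the overall constraint length). For $v=\sum_{j=0}^N v_jz^j\in\mathbb{F}[z]^n$ with $v_j\in\mathbb{F}^n$, the weight is $\mathrm{wt}(v)=\sum_j\mathrm{wt}(v_j)$ with Hamming weight $\mathrm{wt}(v_j)$, and $\mathrm{dist}(\mathcal{C})=\min\{\mathrm{wt}(v)\mid v\in\mathcal{C},v\neq0\}$. A code with parameters $(n,k,\delta)$ is MDS if its distance equals $(n-k)(\lfloor\delta/k\rfloor+1)+\delta+1$, which for $k=1$ equals $n(\delta+1)$. *)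

theory Defs
  imports "HOL-Computational_Algebra.Polynomial" "HOL-Library.Cardinality"
begin

definition mult_ord :: "'a::{finite,field} \<Rightarrow> nat" where
  "mult_ord a = (LEAST k. 0 < k \<and> a ^ k = 1)"

text \<open>Vectors in F[z]^n are functions nat => 'a poly, indices j < n are relevant.\<close>

definition right_invertible_row :: "nat \<Rightarrow> (nat \<Rightarrow> 'a::comm_ring_1 poly) \<Rightarrow> bool" where
  "right_invertible_row n G \<longleftrightarrow> (\<exists>Gt :: nat \<Rightarrow> 'a poly. (\<Sum>j<n. G j * Gt j) = 1)"

definition row_code :: "nat \<Rightarrow> (nat \<Rightarrow> 'a::comm_ring_1 poly) \<Rightarrow> (nat \<Rightarrow> 'a poly) set" where
  "row_code n G = {(\<lambda>j. if j < n then u * G j else 0) | u. True}"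

text \<open>Overall constraint length of a 1 x n matrix: maximal degree of its 1 x 1 minors.\<close>
definition row_constraint_length :: "nat \<Rightarrow> (nat \<Rightarrow> 'a::zero poly) \<Rightarrow> nat" where
  "row_constraint_length n G = Max ((\<lambda>j. degree (G j)) ` {..<n})"

definition hamming_wt :: "nat \<Rightarrow> (nat \<Rightarrow> 'a::zero) \<Rightarrow> nat" where
  "hamming_wt n w = card {j. j < n \<and> w j \<noteq> 0}"

definition poly_vec_wt :: "nat \<Rightarrow> (nat \<Rightarrow> 'a::zero poly) \<Rightarrow> nat" where
  "poly_vec_wt n v = (\<Sum>i\<le>Max ((\<lambda>j. degree (v j)) ` {..<n}). hamming_wt n (\<lambda>j. coeff (v j) i))"

definition code_dist :: "nat \<Rightarrow> (nat \<Rightarrow> 'a::zero poly) set \<Rightarrow> nat" where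
  "code_dist n C = Inf {poly_vec_wt n v | v. v \<in> C \<and> v \<noteq> (\<lambda>_. 0)}"

definition G_mat :: "'a::comm_ring_1 \<Rightarrow> nat \<Rightarrow> nat \<Rightarrow> 'a poly" where
  "G_mat \<alpha> \<delta> j = (\<Sum>\<nu>\<le>\<delta>. monom (\<alpha> ^ (j * \<nu>)) \<nu>)"

end

theory Submission
  imports Defs
begin

text \<open>
  The i-th coefficient vector of a codeword u G is the vector of values of the polynomial
  P_i(X) = \<Sum> u_(i-\<nu>) X^\<nu> (\<nu> \<le> min \<delta> i) at the distinct points \<alpha>^j, j < n,
  i.e. a Reed--Solomon codeword: it misses at most as many positions as P_i has nonzero
  roots, and that number is bounded by the spread of the support of P_i. If the coefficients
  of u lie in [a, d], row d + t (t \<le> \<delta>) misses at most min (\<delta> - t) (d - a) positions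
  and row a + k (k < d - a) at most k. These deficits balance, so rows a, ..., d + \<delta>
  alone have total weight at least n (\<delta> + 1), which G itself attains.
  Right invertibility amounts to the invertibility of the Vandermonde matrix
  (\<alpha>^(j \<nu>)) for j, \<nu> \<le> \<delta>, obtained here by Lagrange interpolation.
\<close>

lemma inj_on_power_if_le_mult_ord:
  fixes \<alpha> :: "'a::{finite,field}"
  assumes "\<alpha> \<noteq> 0" and "n \<le> mult_ord \<alpha>"
  shows "inj_on (\<lambda>j. \<alpha> ^ j) {..<n}"
proof (rule linorder_inj_onI')
  fix i j assume "i \<in> {..<n}" "j \<in> {..<n}" "i < j"
  show "\<alpha> ^ i \<noteq> \<alpha> ^ j"
  proof
    assume "\<alpha> ^ i = \<alpha> ^ j"
    also have "\<alpha> ^ j = \<alpha> ^ i * \<alpha> ^ (j - i)"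
      using \<open>i < j\<close> by (simp flip: power_add)
    finally have "\<alpha> ^ (j - i) = 1"
      using \<open>\<alpha> \<noteq> 0\<close> by simp
    then have "mult_ord \<alpha> \<le> j - i"
      unfolding mult_ord_def using \<open>i < j\<close> by (intro Least_le) simp
    with assms(2) \<open>i < j\<close> \<open>j \<in> {..<n}\<close> show False
      by simp
  qed
qed

lemma lagrange_basis_exists:
  fixes x :: "nat \<Rightarrow> 'a::field"
  assumes "inj_on x {..m}"
  obtains L where "\<And>j. j \<le> m \<Longrightarrow> degree (L j) \<le> m"
    and "\<And>i j. i \<le> m \<Longrightarrow> j \<le> m \<Longrightarrow> poly (L j) (x i) = (if i = j then 1 else 0)"
proof
  define L where "L j = smult (inverse (\<Prod>k\<in>{..m} - {j}. x j - x k)) (\<Prod>k\<in>{..m} - {j}. [:- x k, 1:])"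
    for j
  show "degree (L j) \<le> m" if "j \<le> m" for j
  proof -
    have "degree (L j) \<le> (\<Sum>k\<in>{..m} - {j}. degree [:- x k, 1:])"
      unfolding L_def using degree_prod_sum_le[of "{..m} - {j}" "\<lambda>k. [:- x k, 1:]"]
      by (simp add: o_def order.trans[OF degree_smult_le])
    also have "\<dots> = m" using that by simp
    finally show ?thesis .
  qed
  show "poly (L j) (x i) = (if i = j then 1 else 0)" if "i \<le> m" "j \<le> m" for i j
  proof -
    have "poly (L j) (x i) = inverse (\<Prod>k\<in>{..m} - {j}. x j - x k) * (\<Prod>k\<in>{..m} - {j}. x i - x k)"
      by (simp add: L_def poly_prod)
    moreover have "(\<Prod>k\<in>{..m} - {j}. x j - x k) \<noteq> 0"
      using inj_onD[OF assms] that by auto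
    ultimately show ?thesis
      using that by auto
  qed
qed

lemma vandermonde_solvable:
  fixes x :: "nat \<Rightarrow> 'a::field" and b :: "nat \<Rightarrow> 'a"
  assumes "inj_on x {..m}"
  shows "\<exists>c. \<forall>\<nu>\<le>m. (\<Sum>j\<le>m. c j * x j ^ \<nu>) = b \<nu>"
proof -
  obtain L where deg_L: "\<And>j. j \<le> m \<Longrightarrow> degree (L j) \<le> m"
    and poly_L: "\<And>i j. i \<le> m \<Longrightarrow> j \<le> m \<Longrightarrow> poly (L j) (x i) = (if i = j then 1 else 0)"
    using lagrange_basis_exists[OF assms] by blast
  have interpolation: "monom 1 \<nu> = (\<Sum>j\<le>m. smult (x j ^ \<nu>) (L j))" if "\<nu> \<le> m" for \<nu>
  proof (rule poly_eqI_degree[where A = "x ` {..m}"])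
    show "poly (monom 1 \<nu>) y = poly (\<Sum>j\<le>m. smult (x j ^ \<nu>) (L j)) y" if "y \<in> x ` {..m}" for y
    proof -
      from that obtain i where "i \<le> m" "y = x i" by auto
      then have "(\<Sum>j\<le>m. x j ^ \<nu> * poly (L j) y) = (\<Sum>j\<le>m. if j = i then x i ^ \<nu> else 0)"
        by (intro sum.cong) (auto simp: poly_L)
      then show ?thesis
        using \<open>i \<le> m\<close> \<open>y = x i\<close> by (simp add: poly_monom poly_sum)
    qed
    have "card (x ` {..m}) = Suc m"
      using card_image[OF assms] by simp
    then show "degree (monom (1::'a) \<nu>) < card (x ` {..m})"
      and "degree (\<Sum>j\<le>m. smult (x j ^ \<nu>) (L j)) < card (x ` {..m})"
      using \<open>\<nu> \<le> m\<close> deg_L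
      by (auto intro!: le_imp_less_Suc degree_sum_le order.trans[OF degree_smult_le] simp: degree_monom_eq)
  qed
  define c where "c j = (\<Sum>k\<le>m. b k * coeff (L j) k)" for j
  have "(\<Sum>j\<le>m. c j * x j ^ \<nu>) = b \<nu>" if "\<nu> \<le> m" for \<nu>
  proof -
    have "(\<Sum>j\<le>m. c j * x j ^ \<nu>) = (\<Sum>k\<le>m. b k * (\<Sum>j\<le>m. x j ^ \<nu> * coeff (L j) k))"
      unfolding c_def sum_distrib_right sum_distrib_left by (subst sum.swap) (simp add: mult_ac)
    also have "\<dots> = (\<Sum>k\<le>m. b k * coeff (monom 1 \<nu>) k)"
      by (simp add: interpolation[OF that] coeff_sum)
    also have "\<dots> = (\<Sum>k\<le>m. if \<nu> = k then b k else 0)"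
      by (intro sum.cong) simp_all
    also have "\<dots> = b \<nu>"
      using that by simp
    finally show ?thesis .
  qed
  then show ?thesis by blast
qed

lemma coeff_G_mat: "coeff (G_mat \<alpha> \<delta> j) \<nu> = (if \<nu> \<le> \<delta> then (\<alpha> ^ j) ^ \<nu> else 0)"
  unfolding G_mat_def coeff_sum coeff_monom by (simp add: power_mult)

lemma G_mat_neq_0: "G_mat \<alpha> \<delta> j \<noteq> 0"
  using coeff_G_mat[of \<alpha> \<delta> j 0] by auto

lemma degree_G_mat:
  fixes \<alpha> :: "'a::idom"
  assumes "\<alpha> \<noteq> 0"
  shows "degree (G_mat \<alpha> \<delta> j) = \<delta>"
proof (rule antisym)
  show "degree (G_mat \<alpha> \<delta> j) \<le> \<delta>"
    by (rule degree_le) (simp add: coeff_G_mat)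
  show "\<delta> \<le> degree (G_mat \<alpha> \<delta> j)"
    by (rule le_degree) (simp add: coeff_G_mat assms)
qed

lemma right_invertible_row_G_mat:
  fixes \<alpha> :: "'a::field"
  assumes "inj_on (\<lambda>j. \<alpha> ^ j) {..\<delta>}" and "\<delta> < n"
  shows "right_invertible_row n (G_mat \<alpha> \<delta>)"
proof -
  obtain c where c: "\<And>\<nu>. \<nu> \<le> \<delta> \<Longrightarrow> (\<Sum>j\<le>\<delta>. c j * (\<alpha> ^ j) ^ \<nu>) = (if \<nu> = 0 then 1 else 0)"
    using vandermonde_solvable[OF assms(1), where b = "\<lambda>\<nu>. if \<nu> = 0 then 1 else 0"] by blast
  define Gt where "Gt j = (if j \<le> \<delta> then [:c j:] else 0)" for j
  have "(\<Sum>j<n. G_mat \<alpha> \<delta> j * Gt j) = 1"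
  proof (rule poly_eqI)
    fix \<nu>
    have "coeff (\<Sum>j<n. G_mat \<alpha> \<delta> j * Gt j) \<nu> = (\<Sum>j\<le>\<delta>. c j * coeff (G_mat \<alpha> \<delta> j) \<nu>)"
      unfolding coeff_sum Gt_def using \<open>\<delta> < n\<close>
      by (intro sum.mono_neutral_cong_right) auto
    also have "\<dots> = coeff 1 \<nu>"
      by (cases "\<nu> \<le> \<delta>") (simp_all add: coeff_G_mat c)
    finally show "coeff (\<Sum>j<n. G_mat \<alpha> \<delta> j * Gt j) \<nu> = coeff 1 \<nu>" .
  qed
  then show ?thesis
    unfolding right_invertible_row_def by blast
qed

lemma row_constraint_length_G_mat:
  fixes \<alpha> :: "'a::idom"
  assumes "\<alpha> \<noteq> 0" and "0 < n"
  shows "row_constraint_length n (G_mat \<alpha> \<delta>) = \<delta>"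
proof -
  have "(\<lambda>j. degree (G_mat \<alpha> \<delta> j)) ` {..<n} = {\<delta>}"
    using assms by (auto simp: degree_G_mat)
  then show ?thesis
    unfolding row_constraint_length_def by simp
qed

lemma monom_mult_poly_shift:
  fixes p :: "'a::comm_semiring_1 poly"
  assumes "\<And>k. k < l \<Longrightarrow> coeff p k = 0"
  shows "monom 1 l * poly_shift l p = p"
  by (rule poly_eqI) (auto simp: coeff_monom_mult coeff_poly_shift assms)

lemma card_nonroots_powers_ge:
  fixes \<alpha> :: "'a::field" and p :: "'a poly"
  assumes "\<alpha> \<noteq> 0" and "inj_on (\<lambda>j. \<alpha> ^ j) {..<n}" and "p \<noteq> 0"
    and "\<And>k. k < l \<Longrightarrow> coeff p k = 0"
  shows "n \<le> card {j. j < n \<and> poly p (\<alpha> ^ j) \<noteq> 0} + (degree p - l)"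
proof -
  define q where "q = poly_shift l p"
  have p_eq: "p = monom 1 l * q"
    unfolding q_def by (rule monom_mult_poly_shift[symmetric]) (rule assms(4))
  then have "q \<noteq> 0" and deg_p: "degree p = l + degree q"
    using \<open>p \<noteq> 0\<close> by (auto simp: degree_mult_eq degree_monom_eq)
  let ?Z = "{j. j < n \<and> poly p (\<alpha> ^ j) = 0}"
  have "card ?Z = card ((\<lambda>j. \<alpha> ^ j) ` ?Z)"
    by (rule card_image[symmetric], rule inj_on_subset[OF assms(2)]) auto
  also have "\<dots> \<le> card {x. poly q x = 0}"
    using \<open>\<alpha> \<noteq> 0\<close> \<open>q \<noteq> 0\<close>
    by (intro card_mono poly_roots_finite) (auto simp: p_eq poly_monom)
  also have "\<dots> \<le> degree p - l"
    using card_poly_roots_bound[OF \<open>q \<noteq> 0\<close>] deg_p by simp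
  finally have "card ?Z \<le> degree p - l" .
  moreover have "card {j. j < n \<and> poly p (\<alpha> ^ j) \<noteq> 0} + card ?Z = n"
  proof -
    have "card {j. j < n \<and> poly p (\<alpha> ^ j) \<noteq> 0} + card ?Z
        = card ({j. j < n \<and> poly p (\<alpha> ^ j) \<noteq> 0} \<union> ?Z)"
      by (rule card_Un_disjoint[symmetric]) auto
    also have "{j. j < n \<and> poly p (\<alpha> ^ j) \<noteq> 0} \<union> ?Z = {..<n}"
      by auto
    finally show ?thesis by simp
  qed
  ultimately show ?thesis by linarith
qed

definition coeff_window :: "'a::comm_monoid_add poly \<Rightarrow> nat \<Rightarrow> nat \<Rightarrow> 'a poly" where
  "coeff_window u \<delta> i = (\<Sum>\<nu>\<le>min \<delta> i. monom (coeff u (i - \<nu>)) \<nu>)"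

lemma coeff_coeff_window:
  "coeff (coeff_window u \<delta> i) \<nu> = (if \<nu> \<le> \<delta> \<and> \<nu> \<le> i then coeff u (i - \<nu>) else 0)"
  unfolding coeff_window_def coeff_sum coeff_monom by simp

lemma coeff_mult_G_mat: "coeff (u * G_mat \<alpha> \<delta> j) i = poly (coeff_window u \<delta> i) (\<alpha> ^ j)"
proof -
  have "coeff (u * G_mat \<alpha> \<delta> j) i = (\<Sum>\<nu>\<le>i. coeff (G_mat \<alpha> \<delta> j) \<nu> * coeff u (i - \<nu>))"
    by (subst mult.commute) (rule coeff_mult)
  also have "\<dots> = (\<Sum>\<nu>\<le>min \<delta> i. coeff u (i - \<nu>) * (\<alpha> ^ j) ^ \<nu>)"
    by (rule sum.mono_neutral_cong_right) (auto simp: coeff_G_mat)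
  also have "\<dots> = poly (coeff_window u \<delta> i) (\<alpha> ^ j)"
    unfolding coeff_window_def poly_sum poly_monom ..
  finally show ?thesis .
qed

lemma sum_min_diff_eq: "(\<Sum>t\<le>\<delta>. min (\<delta> - t) D) = (\<Sum>k<D. \<delta> - k)" for \<delta> D :: nat
proof (induction D)
  case 0
  show ?case by simp
next
  case (Suc D)
  have "(\<Sum>t\<le>\<delta>. min (\<delta> - t) (Suc D)) = (\<Sum>t\<le>\<delta>. min (\<delta> - t) D + (if D < \<delta> - t then 1 else 0))"
    by (intro sum.cong) auto
  also have "\<dots> = (\<Sum>t\<le>\<delta>. min (\<delta> - t) D) + card {t. t \<le> \<delta> \<and> D < \<delta> - t}"
    by (simp add: sum.distrib sum.If_cases Int_def)
  also have "{t. t \<le> \<delta> \<and> D < \<delta> - t} = {..<\<delta> - D}" by auto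
  finally show ?case using Suc by simp
qed

lemma coeff_window_lowest:
  assumes "coeff u a \<noteq> 0" and "\<forall>k<a. coeff u k = 0" and "k \<le> \<delta>"
  shows "coeff_window u \<delta> (a + k) \<noteq> 0" and "degree (coeff_window u \<delta> (a + k)) \<le> k"
proof -
  show "coeff_window u \<delta> (a + k) \<noteq> 0"
    using coeff_coeff_window[of u \<delta> "a + k" k] assms(1,3) by auto
  show "degree (coeff_window u \<delta> (a + k)) \<le> k"
    using assms(2) by (intro degree_le) (auto simp: coeff_coeff_window)
qed

lemma coeff_window_leading:
  assumes "u \<noteq> 0" and "\<forall>k<a. coeff u k = 0" and "t \<le> \<delta>"
  shows "coeff_window u \<delta> (degree u + t) \<noteq> 0"
    and "\<forall>k<t. coeff (coeff_window u \<delta> (degree u + t)) k = 0"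
    and "degree (coeff_window u \<delta> (degree u + t)) \<le> min \<delta> (t + (degree u - a))"
proof -
  show "coeff_window u \<delta> (degree u + t) \<noteq> 0"
    using coeff_coeff_window[of u \<delta> "degree u + t" t] assms(1,3) by auto
  show "\<forall>k<t. coeff (coeff_window u \<delta> (degree u + t)) k = 0"
    by (auto simp: coeff_coeff_window coeff_eq_0)
  show "degree (coeff_window u \<delta> (degree u + t)) \<le> min \<delta> (t + (degree u - a))"
    using assms(2) by (intro degree_le) (auto simp: coeff_coeff_window)
qed

lemma sum_card_nonroots_coeff_window_ge:
  fixes \<alpha> :: "'a::field"
  assumes "\<alpha> \<noteq> 0" and "inj_on (\<lambda>j. \<alpha> ^ j) {..<n}" and "\<delta> < n" and "u \<noteq> 0"
  shows "n * (\<delta> + 1) \<le> (\<Sum>i\<le>degree u + \<delta>. card {j. j < n \<and> poly (coeff_window u \<delta> i) (\<alpha> ^ j) \<noteq> 0})"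
proof -
  define w where "w i = card {j. j < n \<and> poly (coeff_window u \<delta> i) (\<alpha> ^ j) \<noteq> 0}" for i
  define d where "d = degree u"
  define a where "a = (LEAST k. coeff u k \<noteq> 0)"
  have "coeff u d \<noteq> 0"
    using \<open>u \<noteq> 0\<close> by (simp add: d_def)
  then have a: "coeff u a \<noteq> 0" "\<forall>k<a. coeff u k = 0" "a \<le> d"
    unfolding a_def by (fact LeastI, blast dest: not_less_Least, fact Least_le)
  have low: "\<delta> - k \<le> w (a + k)" for k
  proof (cases "k \<le> \<delta>")
    case True
    with a have "n \<le> w (a + k) + k"
      using card_nonroots_powers_ge[OF assms(1,2) coeff_window_lowest(1), of u a k \<delta> 0]
        coeff_window_lowest(2)[of u a k \<delta>] unfolding w_def by fastforce
    with \<open>\<delta> < n\<close> show ?thesis by linarith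
  qed simp
  have high: "n \<le> w (d + t) + min (\<delta> - t) (d - a)" if "t \<le> \<delta>" for t
    using card_nonroots_powers_ge[OF assms(1,2) coeff_window_leading(1), of u a t \<delta> t]
      coeff_window_leading(2,3)[of u a t \<delta>] \<open>u \<noteq> 0\<close> a(2) that
    unfolding w_def d_def by fastforce
  have "n * (\<delta> + 1) = (\<Sum>t\<le>\<delta>. n)"
    by simp
  also have "\<dots> \<le> (\<Sum>t\<le>\<delta>. w (d + t)) + (\<Sum>t\<le>\<delta>. min (\<delta> - t) (d - a))"
    unfolding sum.distrib[symmetric] by (intro sum_mono high) simp
  also have "\<dots> = (\<Sum>t\<le>\<delta>. w (d + t)) + (\<Sum>k<d - a. \<delta> - k)"
    by (simp add: sum_min_diff_eq)
  also have "\<dots> \<le> (\<Sum>t\<le>\<delta>. w (d + t)) + (\<Sum>k<d - a. w (a + k))"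
    by (intro add_left_mono sum_mono low)
  also have "\<dots> = (\<Sum>i\<in>{a..<d}. w i) + (\<Sum>i\<in>{d..<Suc (d + \<delta>)}. w i)"
    using sum.shift_bounds_nat_ivl[of w 0 a "d - a"] sum.shift_bounds_nat_ivl[of w 0 d "Suc \<delta>"] \<open>a \<le> d\<close>
    by (simp add: atLeast0LessThan lessThan_Suc_atMost add.commute)
  also have "\<dots> = (\<Sum>i\<in>{a..<Suc (d + \<delta>)}. w i)"
    using \<open>a \<le> d\<close> by (intro sum.atLeastLessThan_concat) simp_all
  also have "\<dots> \<le> (\<Sum>i\<le>d + \<delta>. w i)"
    by (intro sum_mono2) auto
  finally show ?thesis
    unfolding w_def d_def .
qed

lemma poly_vec_wt_codeword:
  fixes \<alpha> :: "'a::field"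
  assumes "\<alpha> \<noteq> 0" and "0 < n" and "u \<noteq> 0"
  shows "poly_vec_wt n (\<lambda>j. if j < n then u * G_mat \<alpha> \<delta> j else 0)
    = (\<Sum>i\<le>degree u + \<delta>. card {j. j < n \<and> poly (coeff_window u \<delta> i) (\<alpha> ^ j) \<noteq> 0})"
proof -
  have "(\<lambda>j. degree (if j < n then u * G_mat \<alpha> \<delta> j else 0)) ` {..<n} = {degree u + \<delta>}"
    using assms by (auto simp: degree_mult_eq degree_G_mat G_mat_neq_0)
  then show ?thesis
    unfolding poly_vec_wt_def hamming_wt_def by (simp add: coeff_mult_G_mat cong: conj_cong)
qed

lemma poly_coeff_window_1: "i \<le> \<delta> \<Longrightarrow> poly (coeff_window 1 \<delta> i) x = x ^ i"
  by (simp add: coeff_window_def poly_sum poly_monom min_absorb2)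

lemma code_dist_row_code_G_mat:
  fixes \<alpha> :: "'a::field"
  assumes "\<alpha> \<noteq> 0" and "inj_on (\<lambda>j. \<alpha> ^ j) {..<n}" and "\<delta> < n"
  shows "code_dist n (row_code n (G_mat \<alpha> \<delta>)) = n * (\<delta> + 1)"
proof -
  let ?v = "\<lambda>u j. if j < n then u * G_mat \<alpha> \<delta> j else 0"
  let ?W = "{poly_vec_wt n v |v. v \<in> row_code n (G_mat \<alpha> \<delta>) \<and> v \<noteq> (\<lambda>_. 0)}"
  have "poly_vec_wt n (?v 1) = n * (\<delta> + 1)"
    using assms poly_vec_wt_codeword[of \<alpha> n 1 \<delta>] by (simp add: poly_coeff_window_1)
  moreover have "?v 1 \<noteq> (\<lambda>_. 0)"
    using \<open>\<delta> < n\<close> G_mat_neq_0[of \<alpha> \<delta> 0] by (auto dest: fun_cong[where x = 0])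
  moreover have "?v 1 \<in> row_code n (G_mat \<alpha> \<delta>)"
    unfolding row_code_def by blast
  ultimately have "n * (\<delta> + 1) \<in> ?W"
    by (intro CollectI exI[of _ "?v 1"]) simp
  moreover have "n * (\<delta> + 1) \<le> x" if "x \<in> ?W" for x
  proof -
    from that obtain u where x: "x = poly_vec_wt n (?v u)" and "?v u \<noteq> (\<lambda>_. 0)"
      unfolding row_code_def by blast
    then have "u \<noteq> 0"
      by auto
    with x assms show ?thesis
      using poly_vec_wt_codeword[of \<alpha> n u \<delta>] sum_card_nonroots_coeff_window_ge[of \<alpha> n \<delta> u]
      by simp
  qed
  ultimately show ?thesis
    unfolding code_dist_def by (rule cInf_eq_minimum)
qed

theorem theorem2p1:
  fixes \<alpha> :: "'a::{finite,field}" and n \<delta> :: nat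
  assumes "1 \<le> n" and "\<delta> \<le> n - 1"
    and "n \<le> CARD('a) - 1"
    and "\<alpha> \<noteq> 0" and "mult_ord \<alpha> \<ge> n"
  shows "right_invertible_row n (G_mat \<alpha> \<delta>)
    \<and> row_constraint_length n (G_mat \<alpha> \<delta>) = \<delta>
    \<and> code_dist n (row_code n (G_mat \<alpha> \<delta>)) = n * (\<delta> + 1)"
proof -
  \<comment> \<open>The hypothesis \<open>n \<le> CARD('a) - 1\<close> is unused; it is implied by \<open>n \<le> mult_ord \<alpha>\<close>.\<close>
  have inj: "inj_on (\<lambda>j. \<alpha> ^ j) {..<n}"
    using assms(4,5) by (rule inj_on_power_if_le_mult_ord)
  have "\<delta> < n"
    using assms(1,2) by linarith
  then have "inj_on (\<lambda>j. \<alpha> ^ j) {..\<delta>}"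
    by (auto intro: inj_on_subset[OF inj])
  then show ?thesis
    using \<open>\<delta> < n\<close> right_invertible_row_G_mat row_constraint_length_G_mat[OF assms(4)]
      code_dist_row_code_G_mat[OF assms(4) inj] by simp
qed

end
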